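(* Let $m\ge4$, $B^m(x)=\frac{x}{1+x^{m-2}}$, $B^m_0(x)=x$ and $B^m_j(x)=B^m(B^m_{j-1}(x))$ for $j\ge1$. For every $j\ge0$, the equation $B^m_j(x)=-1$ has at least one root $x\in\mathbb{C}$, and this root is not a root of $B^m_{j'}(x)=-1$ for any $j'\neq j$. *)

theory Defs
  imports Complex_Main
begin

definition Bm :: "nat \<Rightarrow> complex \<Rightarrow> complex" where
  "Bm m x = x / (1 + x ^ (m - 2))"

definition Bmj :: "nat \<Rightarrow> nat \<Rightarrow> complex \<Rightarrow> complex" where
  "Bmj m j = (Bm m ^^ j)"

end

theory Submission
  imports Defs "HOL-Computational_Algebra.Fundamental_Theorem_Algebra"
begin

text \<open>Existence: for n \<ge> 2 the map y \<mapsto> y / (1 + y^n) is onto \<complex>, since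
  y / (1 + y^n) = z amounts to the non-constant polynomial equation z y^n - y + z = 0; hence every
  iterate of B^m is onto as well. Distinctness: if x solves B^m_i(x) = -1 and B^m_l(x) = -1 with
  i < l, then -1 is periodic under B^m. It is not: for odd m, B^m(-1) = 0 is a fixed point; for even m,
  the exponent m - 2 is even, so B^m does not increase absolute values on the reals and
  B^m(-1) = -1/2.\<close>

lemma surj_divide_one_plus_power:
  assumes "n \<ge> 2"
  shows "surj (\<lambda>y::complex. y / (1 + y ^ n))"
proof -
  have "\<exists>y. y / (1 + y ^ n) = z" for z :: complex
  proof (cases "z = 0")
    case True
    then show ?thesis by auto
  next
    case False
    define p where "p = monom z n + [:z, -1:]"
    have "degree p = n"
      unfolding p_def using assms False by (subst degree_add_eq_left) (auto simp: degree_monom_eq)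
    then have "\<not> constant (poly p)"
      using assms by (simp add: constant_degree)
    then obtain y where "poly p y = 0"
      using fundamental_theorem_of_algebra by blast
    then have y_eq: "y = z * (1 + y ^ n)"
      unfolding p_def by (simp add: poly_monom algebra_simps)
    have "1 + y ^ n \<noteq> 0"
    proof
      assume "1 + y ^ n = 0"
      with y_eq have "y = 0" by simp
      with \<open>1 + y ^ n = 0\<close> assms show False by (simp add: power_0_left)
    qed
    then have "z * (1 + y ^ n) / (1 + y ^ n) = z" by (rule nonzero_mult_div_cancel_right)
    then have "y / (1 + y ^ n) = z"
      unfolding y_eq[symmetric] .
    then show ?thesis ..
  qed
  then show ?thesis unfolding surj_def by metis
qed

lemma surj_Bmj:
  assumes "m \<ge> 4"
  shows "surj (Bmj m j)"
proof -
  have "surj (Bm m)"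
    using surj_divide_one_plus_power[of "m - 2"] assms by (simp add: Bm_def[abs_def])
  then show ?thesis
    unfolding Bmj_def by (rule surj_fn)
qed

lemma Bmj_Suc: "Bmj m (Suc k) x = Bm m (Bmj m k x)"
  by (simp add: Bmj_def)

lemma Bmj_Suc_right: "Bmj m (Suc k) x = Bmj m k (Bm m x)"
  by (simp add: Bmj_def funpow_Suc_right del: funpow.simps)

lemma Bmj_add: "Bmj m (i + j) x = Bmj m i (Bmj m j x)"
  by (simp add: Bmj_def funpow_add)

lemma Bmj_zero: "Bmj m k 0 = 0"
  by (induction k) (simp_all add: Bmj_def Bm_def)

lemma Bm_Reals: "x \<in> \<real> \<Longrightarrow> Bm m x \<in> \<real>"
  by (auto simp: Bm_def elim!: Reals_cases)

lemma norm_Bm_Reals_le: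
  assumes "even m" "x \<in> \<real>"
  shows "norm (Bm m x) \<le> norm x"
proof -
  obtain r where x: "x = of_real r"
    using assms(2) by (auto elim: Reals_cases)
  have "r ^ (m - 2) \<ge> 0"
    using assms(1) by (simp add: zero_le_even_power)
  then have "\<bar>r\<bar> / (1 + r ^ (m - 2)) \<le> \<bar>r\<bar>"
    by (simp add: divide_le_eq mult_le_cancel_left1)
  moreover have "Bm m x = of_real (r / (1 + r ^ (m - 2)))"
    by (simp add: Bm_def x)
  ultimately show ?thesis
    using \<open>r ^ (m - 2) \<ge> 0\<close> by (simp only: norm_of_real x abs_divide)
qed

lemma norm_Bmj_Reals_le:
  assumes "even m" "x \<in> \<real>"
  shows "Bmj m k x \<in> \<real> \<and> norm (Bmj m k x) \<le> norm x"
proof (induction k)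
  case 0
  then show ?case using assms(2) by (simp add: Bmj_def)
next
  case (Suc k)
  then show ?case
    using norm_Bm_Reals_le[OF assms(1), of "Bmj m k x"] by (auto simp: Bmj_Suc Bm_Reals)
qed

lemma Bmj_minus_one_ne:
  assumes "m \<ge> 4" "k > 0"
  shows "Bmj m k (-1) \<noteq> -1"
proof -
  obtain k' where k: "k = Suc k'"
    using assms(2) gr0_conv_Suc by blast
  show ?thesis
  proof (cases "even m")
    case True
    then have "Bm m (-1) = - 1 / 2"
      using assms(1) by (simp add: Bm_def)
    then have "norm (Bmj m k (-1)) \<le> 1 / 2"
      using norm_Bmj_Reals_le[OF True, of "- 1 / 2" k'] by (simp add: k Bmj_Suc_right)
    then show ?thesis by auto
  next
    case False
    then have "Bm m (-1) = 0"
      using assms(1) by (simp add: Bm_def)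
    then show ?thesis
      by (simp add: k Bmj_Suc_right Bmj_zero)
  qed
qed

lemma Bmj_minus_one_unique_index:
  assumes "m \<ge> 4" "Bmj m i x = -1" "Bmj m l x = -1"
  shows "i = l"
proof (rule ccontr)
  assume "i \<noteq> l"
  then consider "i < l" | "l < i" by linarith
  then show False
  proof cases
    case 1
    then have "Bmj m (l - i) (-1) = -1"
      using Bmj_add[of m "l - i" i x] assms(2,3) by simp
    with 1 Bmj_minus_one_ne[OF assms(1)] show False by simp
  next
    case 2
    then have "Bmj m (i - l) (-1) = -1"
      using Bmj_add[of m "i - l" l x] assms(2,3) by simp
    with 2 Bmj_minus_one_ne[OF assms(1)] show False by simp
  qed
qed

theorem proposition2p11:
  fixes m :: nat
  assumes "m \<ge> 4"
  shows "\<forall>j::nat. \<exists>x::complex. Bmj m j x = -1 \<and> (\<forall>j'. j' \<noteq> j \<longrightarrow> Bmj m j' x \<noteq> -1)"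
proof
  fix j
  obtain x where x: "Bmj m j x = -1"
    using surj_Bmj[OF assms] by (metis surjD)
  then have "Bmj m j' x \<noteq> -1" if "j' \<noteq> j" for j'
    using Bmj_minus_one_unique_index[OF assms] that by blast
  with x show "\<exists>x. Bmj m j x = -1 \<and> (\<forall>j'. j' \<noteq> j \<longrightarrow> Bmj m j' x \<noteq> -1)" by blast
qed

end
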